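(* Let $P\subset\mathbb{R}^D$ be an $(\epsilon_1,\epsilon_2)$-significant instance of $k$-center clustering with $z$ outliers, $|P|=n$, and let $\eta\in(0,1)$. Consider the following algorithm: (1) sample a set $S$ of $\frac{k}{\epsilon_1}\log\frac{k}{\eta}$ points uniformly at random from $P$; (2) let $k'=\frac{1}{\eta}\frac{\epsilon_2}{k}|S|$ and run Gonzalez's algorithm for $(k+k')$-center clustering on $S$; output the set $H$ of $k+k'$ centers it returns. Then $|H|=k+\frac{1}{\eta}\frac{\epsilon_2}{\epsilon_1}\log\frac{k}{\eta}$, and with probability at least $(1-\eta)^2$, $\Delta^{-z}_{\infty}(P,H)\le 4r_{opt}$.
   Context: For a finite $H\subset\mathbb{R}^D$ and a point $p$, $dist(p,H)=\min_{q\in H}\|p-q\|$. For an integer $0<z<n$, $\Delta^{-z}_{\infty}(P,H)=\min\{\max_{p\in P'}dist(p,H): P'\subset P, |P'|=n-z\}$. The $k$-center clustering with $z$ outliers problem asks for $k$ centers $C\subset\mathbb{R}^D$ minimizing $\Delta^{-z}_{\infty}(P,C)$; $r_{opt}$ denotes this optimal value. $P_{opt}\subset P$ with $|P_{opt}|=n-z$ denotes the set of inliers of an optimal solution, and $C^*_1,\dots,C^*_k$ are the optimal clusters forming $P_{opt}$ (each point of $P_{opt}$ assigned to its nearest optimal center). The instance is $(\epsilon_1,\epsilon_2)$-significant ($\epsilon_1,\epsilon_2>0$) if $\min_{1\le j\le k}|C^*_j|\ge\frac{\epsilon_1}{k}n$ and $z=\frac{\epsilon_2}{k}n$. Sampling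 uniformly at random means each sample point is drawn independently and uniformly from $P$. Gonzalez's algorithm for $m$-center clustering on $S$: pick an arbitrary point of $S$ as the first center, then repeatedly add as a new center the point of $S$ farthest from the current centers, until $m$ centers are chosen; it is a 2-approximation, i.e., all of $S$ is covered by balls of radius at most twice the optimal $m$-center radius of $S$ around the returned centers. *)

theory Defs
  imports "HOL-Analysis.Analysis" "HOL-Probability.Probability"
begin

text \<open>dist(p,H) is the library's infdist (= min over finite nonempty H).\<close>

definition outlier_cost :: "'a::euclidean_space set \<Rightarrow> nat \<Rightarrow> 'a set \<Rightarrow> real" where
  "outlier_cost P z H =
     Min {Max ((\<lambda>p. infdist p H) ` P') | P'. P' \<subseteq> P \<and> card P' = card P - z}"

definition r_opt :: "'a::euclidean_space set \<Rightarrow> nat \<Rightarrow> nat \<Rightarrow> real" where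
  "r_opt P k z = Inf (outlier_cost P z ` {C. finite C \<and> card C = k})"

definition significant :: "'a::euclidean_space set \<Rightarrow> nat \<Rightarrow> nat \<Rightarrow> real \<Rightarrow> real \<Rightarrow> bool" where
  "significant P k z eps1 eps2 \<longleftrightarrow>
     real z = eps2 / real k * real (card P) \<and>
     (\<exists>(c :: nat \<Rightarrow> 'a) Popt (asg :: 'a \<Rightarrow> nat).
        inj_on c {..<k} \<and>
        outlier_cost P z (c ` {..<k}) = r_opt P k z \<and>
        Popt \<subseteq> P \<and> card Popt = card P - z \<and>
        Max ((\<lambda>p. infdist p (c ` {..<k})) ` Popt) = r_opt P k z \<and>
        (\<forall>p\<in>Popt. asg p < k \<and> dist p (c (asg p)) = infdist p (c ` {..<k})) \<and>
        (\<forall>j<k. real (card {p\<in>Popt. asg p = j}) \<ge> eps1 / real k * real (card P)))"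

text \<open>cs is a possible output (list of m centers, in order of selection) of Gonzalez's
  algorithm on S: first center arbitrary in S, each later one a farthest point of S
  from the previously chosen centers (ties arbitrary).\<close>
definition gonzalez_run :: "'a::euclidean_space set \<Rightarrow> nat \<Rightarrow> 'a list \<Rightarrow> bool" where
  "gonzalez_run S m cs \<longleftrightarrow>
     length cs = m \<and> set cs \<subseteq> S \<and>
     (\<forall>i. 0 < i \<and> i < m \<longrightarrow>
        (\<forall>q\<in>S. infdist q (set (take i cs)) \<le> infdist (cs ! i) (set (take i cs))))"

end

theory Submission
  imports Defs
begin

text \<open>
  Fix an optimal inlier set P_opt.  Call the sample good if it meets every optimal
  cluster and contains at most k' points outside P_opt.  A good sample splits into at
  most k + k' groups of diameter at most 2 r_opt (one per cluster, one per outlier sample), so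
  Gonzalez's traversal with k + k' centres covers it within 2 r_opt: otherwise the centres
  together with an uncovered sample point would be k + k' + 1 points pairwise more than
  2 r_opt apart, two of them in the same group.  Every inlier is within 2 r_opt of a sampled
  point of its own cluster, hence within 4 r_opt of the centres.

  A fixed cluster is missed with probability at most (1 - eps1/k)^m, at most eta/k, and the
  expected number of outlier samples is eta k', so by the union bound and Markov's inequality
  each of the two events has probability at least 1 - eta.  They are not independent, but both
  grow with the set of samples landing in P_opt, so by Harris' inequality (proved by
  induction on m) they are positively correlated.
\<close>

definition sample_pmf :: "'a set \<Rightarrow> nat \<Rightarrow> (nat \<Rightarrow> 'a) pmf" where
  "sample_pmf P m = Pi_pmf {..<m} undefined (\<lambda>_. pmf_of_set P)"

lemma finite_set_sample_pmf:
  assumes "finite P" "P \<noteq> {}"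
  shows "finite (set_pmf (sample_pmf P m))"
  using assms by (auto simp: sample_pmf_def set_Pi_pmf)

lemma prob_sample_pmf_0: "measure_pmf.prob (sample_pmf P 0) E = indicator E (\<lambda>_. undefined)"
  by (simp add: sample_pmf_def)

lemma prob_sample_pmf_Suc:
  assumes "finite P" "P \<noteq> {}"
  shows "measure_pmf.prob (sample_pmf P (Suc m)) E =
    (\<Sum>x\<in>P. measure_pmf.prob (sample_pmf P m) {f. f(m := x) \<in> E}) / real (card P)"
proof -
  let ?Q = "sample_pmf P m"
  have step: "sample_pmf P (Suc m) = pmf_of_set P \<bind> (\<lambda>x. map_pmf (\<lambda>f. f(m := x)) ?Q)"
    unfolding sample_pmf_def lessThan_Suc by (subst Pi_pmf_insert') (auto simp: map_pmf_def)
  have "measure_pmf.expectation (sample_pmf P (Suc m)) (indicator E :: _ \<Rightarrow> real) =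
      (\<Sum>x\<in>P. measure_pmf.expectation (map_pmf (\<lambda>f. f(m := x)) ?Q) (indicator E) /\<^sub>R real (card P))"
    unfolding step using assms finite_set_sample_pmf[OF assms]
    by (intro pmf_expectation_bind_pmf_of_set) auto
  moreover have "measure_pmf.expectation (map_pmf (\<lambda>f. f(m := x)) ?Q) (indicator E :: _ \<Rightarrow> real) =
      measure_pmf.prob ?Q {f. f(m := x) \<in> E}" for x
    by (simp add: vimage_def)
  ultimately show ?thesis by (simp add: sum_distrib_left divide_inverse_commute)
qed

lemma prob_sample_pmf_Suc_split:
  assumes "finite P" "P \<noteq> {}" "Q \<subseteq> P"
    and "\<And>x. x \<in> Q \<Longrightarrow> measure_pmf.prob (sample_pmf P m) {f. f(m := x) \<in> E} = F x"
    and "\<And>x. x \<in> P - Q \<Longrightarrow> measure_pmf.prob (sample_pmf P m) {f. f(m := x) \<in> E} = G"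
  shows "measure_pmf.prob (sample_pmf P (Suc m)) E = (sum F Q + real (card (P - Q)) * G) / real (card P)"
proof -
  have "(\<Sum>x\<in>P. measure_pmf.prob (sample_pmf P m) {f. f(m := x) \<in> E}) =
      (\<Sum>x\<in>P - Q. measure_pmf.prob (sample_pmf P m) {f. f(m := x) \<in> E}) +
      (\<Sum>x\<in>Q. measure_pmf.prob (sample_pmf P m) {f. f(m := x) \<in> E})"
    by (rule sum.subset_diff[OF assms(3,1)])
  also have "\<dots> = real (card (P - Q)) * G + sum F Q"
    using assms(4,5) by simp
  finally show ?thesis by (simp add: prob_sample_pmf_Suc[OF assms(1,2)])
qed

lemma prob_sample_pmf_all_in:
  assumes "finite P" "P \<noteq> {}"
  shows "measure_pmf.prob (sample_pmf P m) {f. \<forall>i<m. f i \<in> X} = (real (card (P \<inter> X)) / real (card P)) ^ m"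
proof -
  have "{f. \<forall>i<m. f i \<in> X} = Pi {..<m} (\<lambda>_. X)" by auto
  then show ?thesis
    using assms by (simp add: sample_pmf_def measure_Pi_pmf_Pi measure_pmf_of_set)
qed

definition hits_clusters :: "'a set \<Rightarrow> ('a \<Rightarrow> nat) \<Rightarrow> nat \<Rightarrow> nat set \<Rightarrow> (nat \<Rightarrow> 'a) \<Rightarrow> bool" where
  "hits_clusters Q asg m J f \<longleftrightarrow> (\<forall>j\<in>J. \<exists>i<m. f i \<in> Q \<and> asg (f i) = j)"

definition count_outside :: "'a set \<Rightarrow> nat \<Rightarrow> (nat \<Rightarrow> 'a) \<Rightarrow> nat" where
  "count_outside Q m f = card {i. i < m \<and> f i \<notin> Q}"

lemma hits_clusters_0 [simp]: "hits_clusters Q asg 0 J f \<longleftrightarrow> J = {}"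
  unfolding hits_clusters_def by auto

lemma hits_clusters_Suc:
  "hits_clusters Q asg (Suc m) J (f(m := x)) \<longleftrightarrow>
     hits_clusters Q asg m (if x \<in> Q then J - {asg x} else J) f"
  unfolding hits_clusters_def by (auto simp: less_Suc_eq)

lemma hits_clusters_antimono: "J' \<subseteq> J \<Longrightarrow> hits_clusters Q asg m J f \<Longrightarrow> hits_clusters Q asg m J' f"
  unfolding hits_clusters_def by auto

lemma count_outside_0 [simp]: "count_outside Q 0 f = 0"
  unfolding count_outside_def by simp

lemma count_outside_Suc:
  "count_outside Q (Suc m) (f(m := x)) = count_outside Q m f + (if x \<in> Q then 0 else 1)"
proof -
  have "{i. i < Suc m \<and> (f(m := x)) i \<notin> Q} = {i. i < m \<and> f i \<notin> Q} \<union> (if x \<in> Q then {} else {m})"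
    by (auto simp: less_Suc_eq)
  then show ?thesis unfolding count_outside_def by (auto simp: card_insert_if)
qed

lemma count_outside_eq_sum: "real (count_outside Q m f) = (\<Sum>i<m. indicator (- Q) (f i))"
proof -
  have "{..<m} \<inter> {i. f i \<notin> Q} = {i. i < m \<and> f i \<notin> Q}" by auto
  then show ?thesis unfolding count_outside_def by (simp add: indicator_def sum.If_cases)
qed

lemma expectation_count_outside:
  assumes "finite P" "P \<noteq> {}"
  shows "measure_pmf.expectation (sample_pmf P m) (\<lambda>f. real (count_outside Q m f)) =
    real m * real (card (P - Q)) / real (card P)"
proof -
  have "measure_pmf.expectation (sample_pmf P m) (\<lambda>f. indicator (- Q) (f i) :: real) =
      real (card (P - Q)) / real (card P)" if "i < m" for i
  proof -
    have "map_pmf (\<lambda>f. f i) (sample_pmf P m) = pmf_of_set P"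
      using that by (simp add: sample_pmf_def Pi_pmf_component)
    have "measure_pmf.expectation (sample_pmf P m) (\<lambda>f. indicator (- Q) (f i) :: real) =
        measure_pmf.expectation (map_pmf (\<lambda>f. f i) (sample_pmf P m)) (indicator (- Q))"
      by (simp only: integral_map_pmf)
    also have "\<dots> = measure_pmf.prob (pmf_of_set P) (- Q)"
      using \<open>map_pmf (\<lambda>f. f i) (sample_pmf P m) = pmf_of_set P\<close> by simp
    also have "\<dots> = real (card (P - Q)) / real (card P)"
      using assms by (simp add: measure_pmf_of_set Diff_eq)
    finally show ?thesis .
  qed
  moreover have "integrable (sample_pmf P m) h" for h :: "_ \<Rightarrow> real"
    by (rule integrable_measure_pmf_finite[OF finite_set_sample_pmf[OF assms]])
  ultimately show ?thesis
    by (simp add: count_outside_eq_sum Bochner_Integration.integral_sum)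
qed

lemma prob_hits_clusters_Suc:
  assumes "finite P" "P \<noteq> {}" "Q \<subseteq> P"
  shows "measure_pmf.prob (sample_pmf P (Suc m)) {f. hits_clusters Q asg (Suc m) J f} =
    ((\<Sum>x\<in>Q. measure_pmf.prob (sample_pmf P m) {f. hits_clusters Q asg m (J - {asg x}) f}) +
      real (card (P - Q)) * measure_pmf.prob (sample_pmf P m) {f. hits_clusters Q asg m J f})
    / real (card P)"
  by (rule prob_sample_pmf_Suc_split[OF assms]) (auto simp: hits_clusters_Suc)

lemma prob_count_outside_le_Suc:
  assumes "finite P" "P \<noteq> {}" "Q \<subseteq> P"
  shows "measure_pmf.prob (sample_pmf P (Suc m)) {f. count_outside Q (Suc m) f \<le> t} =
    (real (card Q) * measure_pmf.prob (sample_pmf P m) {f. count_outside Q m f \<le> t} +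
      real (card (P - Q)) * measure_pmf.prob (sample_pmf P m) {f. count_outside Q m f + 1 \<le> t})
    / real (card P)"
  by (subst prob_sample_pmf_Suc_split[OF assms,
        where F = "\<lambda>_. measure_pmf.prob (sample_pmf P m) {f. count_outside Q m f \<le> t}"])
    (auto simp: count_outside_Suc)

lemma prob_hits_clusters_count_outside_le_Suc:
  assumes "finite P" "P \<noteq> {}" "Q \<subseteq> P"
  shows "measure_pmf.prob (sample_pmf P (Suc m))
      {f. hits_clusters Q asg (Suc m) J f \<and> count_outside Q (Suc m) f \<le> t} =
    ((\<Sum>x\<in>Q. measure_pmf.prob (sample_pmf P m)
        {f. hits_clusters Q asg m (J - {asg x}) f \<and> count_outside Q m f \<le> t}) +
      real (card (P - Q)) * measure_pmf.prob (sample_pmf P m)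
        {f. hits_clusters Q asg m J f \<and> count_outside Q m f + 1 \<le> t})
    / real (card P)"
  by (rule prob_sample_pmf_Suc_split[OF assms]) (auto simp: hits_clusters_Suc count_outside_Suc)

text \<open>The induction step of Harris' inequality below: the last sample lands in Q with weight q
  and outside with weight r, and both events are at least as likely after a landing in Q.\<close>

lemma mixture_product_le:
  fixes S a b0 b1 c0 c1 q r :: real
  assumes "r \<ge> 0" "q + r > 0"
    and "S \<ge> q * a" "b1 \<ge> b0" "c1 \<ge> S * b1" "c0 \<ge> a * b0"
  shows "(S + r * a) / (q + r) * ((q * b1 + r * b0) / (q + r)) \<le> (c1 + r * c0) / (q + r)"
proof -
  have "(S + r * a) * (q * b1 + r * b0) = (q + r) * (S * b1 + r * (a * b0)) - r * (b1 - b0) * (S - q * a)"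
    by (simp add: algebra_simps)
  also have "\<dots> \<le> (q + r) * (S * b1 + r * (a * b0))"
    using assms by simp
  also have "\<dots> \<le> (q + r) * (c1 + r * c0)"
    using assms by (intro mult_left_mono add_mono) auto
  finally have "(S + r * a) * (q * b1 + r * b0) \<le> (q + r) * (c1 + r * c0)" .
  then have "(S + r * a) * (q * b1 + r * b0) / ((q + r) * (q + r)) \<le> (q + r) * (c1 + r * c0) / ((q + r) * (q + r))"
    using assms(2) by (intro divide_right_mono) auto
  then show ?thesis using assms(2) by simp
qed

lemma hits_clusters_count_outside_correlated:
  assumes "finite P" "P \<noteq> {}" "Q \<subseteq> P"
  shows "measure_pmf.prob (sample_pmf P m) {f. hits_clusters Q asg m J f} *
           measure_pmf.prob (sample_pmf P m) {f. count_outside Q m f \<le> t}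
         \<le> measure_pmf.prob (sample_pmf P m) {f. hits_clusters Q asg m J f \<and> count_outside Q m f \<le> t}"
proof (induction m arbitrary: J t)
  case 0
  then show ?case by (simp add: prob_sample_pmf_0)
next
  case (Suc m)
  let ?Pr = "measure_pmf.prob (sample_pmf P m)"
  define a where "a J = ?Pr {f. hits_clusters Q asg m J f}" for J
  define b where "b t = ?Pr {f. count_outside Q m f \<le> t}" for t
  define c where "c J t = ?Pr {f. hits_clusters Q asg m J f \<and> count_outside Q m f \<le> t}" for J t
  define b0 where "b0 = ?Pr {f. count_outside Q m f + 1 \<le> t}"
  define c0 where "c0 = ?Pr {f. hits_clusters Q asg m J f \<and> count_outside Q m f + 1 \<le> t}"
  define S where "S = (\<Sum>x\<in>Q. a (J - {asg x}))"
  have card_P: "real (card P) = real (card Q) + real (card (P - Q))"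
    using assms by (simp add: card_Diff_subset card_mono finite_subset)
  have card_P_pos: "real (card Q) + real (card (P - Q)) > 0"
    using assms by (simp flip: card_P add: card_gt_0_iff)
  have hit: "measure_pmf.prob (sample_pmf P (Suc m)) {f. hits_clusters Q asg (Suc m) J f}
      = (S + real (card (P - Q)) * a J) / real (card P)"
    unfolding S_def a_def by (rule prob_hits_clusters_Suc[OF assms])
  have few: "measure_pmf.prob (sample_pmf P (Suc m)) {f. count_outside Q (Suc m) f \<le> t}
      = (real (card Q) * b t + real (card (P - Q)) * b0) / real (card P)"
    unfolding b_def b0_def by (rule prob_count_outside_le_Suc[OF assms])
  have both: "measure_pmf.prob (sample_pmf P (Suc m))
        {f. hits_clusters Q asg (Suc m) J f \<and> count_outside Q (Suc m) f \<le> t}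
      = ((\<Sum>x\<in>Q. c (J - {asg x}) t) + real (card (P - Q)) * c0) / real (card P)"
    unfolding c_def c0_def by (rule prob_hits_clusters_count_outside_le_Suc[OF assms])
  have "real (card Q) * a J \<le> S"
    unfolding S_def a_def
    by (rule sum_bounded_below, rule measure_pmf.finite_measure_mono) (auto intro: hits_clusters_antimono)
  moreover have "b0 \<le> b t"
    unfolding b_def b0_def by (rule measure_pmf.finite_measure_mono) auto
  moreover have "S * b t \<le> (\<Sum>x\<in>Q. c (J - {asg x}) t)"
    unfolding S_def sum_distrib_right a_def b_def c_def by (intro sum_mono Suc.IH)
  moreover have "a J * b0 \<le> c0"
  proof (cases t)
    case 0
    then show ?thesis by (simp add: c0_def b0_def)
  next
    case (Suc t')
    then show ?thesis using Suc.IH[of J t'] by (simp add: a_def b0_def c0_def)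
  qed
  ultimately show ?case
    unfolding hit few both card_P
    by (intro mixture_product_le card_P_pos) auto
qed

lemma prob_hits_clusters_ge:
  assumes "finite P" "P \<noteq> {}" "Q \<subseteq> P" "finite J"
    and large: "\<And>j. j \<in> J \<Longrightarrow> c * real (card P) \<le> real (card {p\<in>Q. asg p = j})"
  shows "1 - real (card J) * exp (- c * real m) \<le> measure_pmf.prob (sample_pmf P m) {f. hits_clusters Q asg m J f}"
proof -
  let ?Pr = "measure_pmf.prob (sample_pmf P m)"
  define misses where "misses j = {f. \<forall>i<m. f i \<in> - {p\<in>Q. asg p = j}}" for j
  have miss: "?Pr (misses j) \<le> exp (- c * real m)" if "j \<in> J" for j
  proof -
    define C where "C = {p\<in>Q. asg p = j}"
    have "C \<subseteq> P" using assms(3) by (auto simp: C_def)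
    then have "real (card (P \<inter> - C)) = real (card P) - real (card C)"
      using assms(1) by (simp add: Diff_eq[symmetric] card_Diff_subset finite_subset card_mono)
    then have ratio: "real (card (P \<inter> - C)) / real (card P) \<le> 1 - c"
      using large[OF that] assms(1,2) by (simp add: C_def field_simps card_gt_0_iff)
    have "?Pr (misses j) = (real (card (P \<inter> - C)) / real (card P)) ^ m"
      unfolding misses_def C_def by (rule prob_sample_pmf_all_in[OF assms(1,2)])
    also have "\<dots> \<le> (1 - c) ^ m"
      using ratio by (intro power_mono) auto
    also have "\<dots> \<le> exp (- c) ^ m"
    proof (intro power_mono)
      show "1 - c \<le> exp (- c)" using exp_ge_add_one_self[of "- c"] by simp
      show "0 \<le> 1 - c" using ratio divide_nonneg_nonneg[of "real (card (P \<inter> - C))" "real (card P)"] by linarith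
    qed
    finally show ?thesis by (simp add: exp_of_nat_mult[symmetric] mult.commute)
  qed
  have "{f. \<not> hits_clusters Q asg m J f} \<subseteq> (\<Union>j\<in>J. misses j)"
    unfolding hits_clusters_def misses_def by auto
  then have "?Pr {f. \<not> hits_clusters Q asg m J f} \<le> ?Pr (\<Union>j\<in>J. misses j)"
    by (intro measure_pmf.finite_measure_mono) auto
  also have "\<dots> \<le> (\<Sum>j\<in>J. ?Pr (misses j))"
    using assms(4) by (intro measure_pmf.finite_measure_subadditive_finite) auto
  also have "\<dots> \<le> real (card J) * exp (- c * real m)"
    using miss sum_bounded_above[of J "\<lambda>j. ?Pr (misses j)"] by auto
  finally show ?thesis
    using measure_pmf.prob_compl[of "{f. hits_clusters Q asg m J f}"] by (simp add: Compl_eq_Diff_UNIV[symmetric] Collect_neg_eq)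
qed

lemma prob_count_outside_le_ge:
  assumes "finite P" "P \<noteq> {}"
  shows "1 - real m * real (card (P - Q)) / real (card P) / (real t + 1)
           \<le> measure_pmf.prob (sample_pmf P m) {f. count_outside Q m f \<le> t}"
proof -
  let ?Pr = "measure_pmf.prob (sample_pmf P m)"
  have "?Pr {f. real t + 1 \<le> real (count_outside Q m f)} \<le>
      measure_pmf.expectation (sample_pmf P m) (\<lambda>f. real (count_outside Q m f)) / (real t + 1)"
    using integral_Markov_inequality_measure[where M = "sample_pmf P m" and A = UNIV]
    by (simp add: integrable_measure_pmf_finite finite_set_sample_pmf[OF assms])
  also have "\<dots> = real m * real (card (P - Q)) / real (card P) / (real t + 1)"
    by (simp add: expectation_count_outside[OF assms])
  also have "{f. real t + 1 \<le> real (count_outside Q m f)} = UNIV - {f. count_outside Q m f \<le> t}"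
    by auto
  finally show ?thesis
    using measure_pmf.prob_compl[of "{f. count_outside Q m f \<le> t}" "sample_pmf P m"] by simp
qed

lemma prob_good_sample_ge:
  assumes "finite P" "P \<noteq> {}" "Popt \<subseteq> P" "0 < k" "0 < eps1" "0 < eta" "eta < 1"
    and large: "\<And>j. j < k \<Longrightarrow> eps1 / real k * real (card P) \<le> real (card {p\<in>Popt. asg p = j})"
    and m_def: "real m = real k / eps1 * ln (real k / eta)"
    and outside: "real m * real (card (P - Popt)) / real (card P) = eta * real k'"
  shows "(1 - eta) ^ 2 \<le> measure_pmf.prob (sample_pmf P m)
           {f. hits_clusters Popt asg m {..<k} f \<and> count_outside Popt m f \<le> k'}"
proof -
  let ?Pr = "measure_pmf.prob (sample_pmf P m)"
  have "real k * exp (- (eps1 / real k) * real m) = eta"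
    using m_def assms(4-6) by (simp add: exp_minus)
  then have "1 - eta \<le> ?Pr {f. hits_clusters Popt asg m {..<k} f}"
    using prob_hits_clusters_ge[OF assms(1-3), of "{..<k}" "eps1 / real k" asg m] large by simp
  moreover have "real m * real (card (P - Popt)) / real (card P) / (real k' + 1) \<le> eta"
    using outside assms(6) by (simp add: pos_divide_le_eq)
  then have "1 - eta \<le> ?Pr {f. count_outside Popt m f \<le> k'}"
    using prob_count_outside_le_ge[OF assms(1,2), of m Popt k'] by simp
  ultimately have "(1 - eta) ^ 2 \<le> ?Pr {f. hits_clusters Popt asg m {..<k} f} * ?Pr {f. count_outside Popt m f \<le> k'}"
    unfolding power2_eq_square using assms(7) by (intro mult_mono) auto
  also have "\<dots> \<le> ?Pr {f. hits_clusters Popt asg m {..<k} f \<and> count_outside Popt m f \<le> k'}"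
    by (rule hits_clusters_count_outside_correlated[OF assms(1-3)])
  finally show ?thesis .
qed

lemma gonzalez_run_infdist_le_dist:
  assumes run: "gonzalez_run S K cs" and "q \<in> S" "i < j" "j < K"
  shows "infdist q (set cs) \<le> dist (cs ! j) (cs ! i)"
proof -
  have len: "length cs = K" using run by (simp add: gonzalez_run_def)
  have earlier: "cs ! i \<in> set (take j cs)"
    using assms(3,4) len by (metis in_set_conv_nth length_take min.absorb4 nth_take)
  have "infdist q (set cs) \<le> infdist q (set (take j cs))"
    using earlier by (intro infdist_mono set_take_subset) (metis empty_iff)
  also have "\<dots> \<le> infdist (cs ! j) (set (take j cs))"
    using run assms(2,4) \<open>i < j\<close> unfolding gonzalez_run_def by simp
  also have "\<dots> \<le> dist (cs ! j) (cs ! i)"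
    using earlier by (rule infdist_le)
  finally show ?thesis .
qed

lemma gonzalez_run_infdist_le:
  fixes g :: "'a::euclidean_space \<Rightarrow> 'b"
  assumes run: "gonzalez_run S K cs"
    and G: "finite G" "card G \<le> K" "g ` S \<subseteq> G"
    and close: "\<And>x y. x \<in> S \<Longrightarrow> y \<in> S \<Longrightarrow> g x = g y \<Longrightarrow> dist x y \<le> R"
    and q: "q \<in> S"
  shows "infdist q (set cs) \<le> R"
proof (rule ccontr)
  assume far: "\<not> infdist q (set cs) \<le> R"
  have len: "length cs = K" and "set cs \<subseteq> S" using run by (auto simp: gonzalez_run_def)
  define x where "x i = (cs @ [q]) ! i" for i
  have x_in: "x i \<in> S" if "i \<le> K" for i
    using that len \<open>set cs \<subseteq> S\<close> q by (auto simp: x_def nth_append)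
  have separated: "R < dist (x j) (x i)" if "i < j" "j \<le> K" for i j
  proof (cases "j < K")
    case True
    then show ?thesis
      using gonzalez_run_infdist_le_dist[OF run q that(1)] far that len by (simp add: x_def nth_append)
  next
    case False
    then have "infdist q (set cs) \<le> dist (x j) (x i)"
      using that len by (simp add: x_def nth_append infdist_le)
    then show ?thesis using far by simp
  qed
  have "inj_on (g \<circ> x) {..K}"
  proof (rule linorder_inj_onI')
    fix i j assume "i \<in> {..K}" "j \<in> {..K}" "i < j"
    then show "(g \<circ> x) i \<noteq> (g \<circ> x) j"
      using separated[of i j] close[of "x j" "x i"] x_in by auto
  qed
  moreover have "(g \<circ> x) ` {..K} \<subseteq> G" using G(3) x_in by auto
  ultimately have "card {..K} \<le> card G" using G(1) by (rule card_inj_on_le)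
  then show False using G(2) by simp
qed

lemma outlier_cost_le:
  assumes "finite P" "P' \<subseteq> P" "card P' = card P - z"
  shows "outlier_cost P z H \<le> Max ((\<lambda>p. infdist p H) ` P')"
proof -
  have "{Max ((\<lambda>p. infdist p H) ` P') | P'. P' \<subseteq> P \<and> card P' = card P - z}
      \<subseteq> (\<lambda>P'. Max ((\<lambda>p. infdist p H) ` P')) ` Pow P" by auto
  then have "finite {Max ((\<lambda>p. infdist p H) ` P') | P'. P' \<subseteq> P \<and> card P' = card P - z}"
    using assms(1) by (rule finite_subset[OF _ finite_imageI[OF finite_Pow_iff[THEN iffD2]]])
  then show ?thesis
    unfolding outlier_cost_def using assms(2,3) by (intro Min_le) auto
qed

lemma gonzalez_run_covers_sample:
  fixes c :: "nat \<Rightarrow> 'a::euclidean_space"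
  assumes "0 \<le> r"
    and asg: "asg ` Popt \<subseteq> {..<k}"
    and near: "\<And>p. p \<in> Popt \<Longrightarrow> dist p (c (asg p)) \<le> r"
    and few: "count_outside Popt m f \<le> k'"
    and run: "gonzalez_run (f ` {..<m}) (k + k') cs"
    and "y \<in> f ` {..<m}"
  shows "infdist y (set cs) \<le> 2 * r"
proof -
  define S where "S = f ` {..<m}"
  define g where "g y = (if y \<in> Popt then Inl (asg y) else Inr y)" for y
  define G where "G = Inl ` {..<k} \<union> Inr ` (S - Popt)"
  have "S - Popt = f ` {i. i < m \<and> f i \<notin> Popt}" unfolding S_def by auto
  then have "card (S - Popt) \<le> k'"
    using few card_image_le[of "{i. i < m \<and> f i \<notin> Popt}" f] unfolding count_outside_def by simp
  then have "card G \<le> k + k'"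
    unfolding G_def using card_Un_le[of "Inl ` {..<k}" "Inr ` (S - Popt)"]
    by (simp add: card_image)
  moreover have "finite G" "g ` S \<subseteq> G" using asg unfolding G_def g_def S_def by auto
  moreover have "dist x y \<le> 2 * r" if "x \<in> S" "y \<in> S" "g x = g y" for x y
  proof (cases "x \<in> Popt")
    case True
    with that have "y \<in> Popt" "asg y = asg x" by (auto simp: g_def split: if_splits)
    then show ?thesis
      using dist_triangle2[of x y "c (asg x)"] near[OF True] near[of y] by simp
  next
    case False
    with that have "y = x" by (auto simp: g_def split: if_splits)
    then show ?thesis using \<open>0 \<le> r\<close> by simp
  qed
  ultimately show ?thesis
    using gonzalez_run_infdist_le[OF run[folded S_def]] \<open>y \<in> f ` {..<m}\<close> unfolding S_def by blast
qed

lemma outlier_cost_gonzalez_le: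
  fixes P :: "'a::euclidean_space set" and c :: "nat \<Rightarrow> 'a"
  assumes "finite P" "Popt \<subseteq> P" "card Popt = card P - z" "Popt \<noteq> {}"
    and asg: "asg ` Popt \<subseteq> {..<k}"
    and near: "\<And>p. p \<in> Popt \<Longrightarrow> dist p (c (asg p)) \<le> r"
    and hits: "hits_clusters Popt asg m {..<k} f" and few: "count_outside Popt m f \<le> k'"
    and run: "gonzalez_run (f ` {..<m}) (k + k') cs"
  shows "outlier_cost P z (set cs) \<le> 4 * r"
proof -
  have "0 \<le> r" using assms(4) near zero_le_dist order_trans by blast
  have "infdist p (set cs) \<le> 4 * r" if p: "p \<in> Popt" for p
  proof -
    obtain i where i: "i < m" "f i \<in> Popt" "asg (f i) = asg p"
      using hits asg p unfolding hits_clusters_def by blast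
    have "infdist p (set cs) \<le> infdist (f i) (set cs) + dist p (f i)"
      by (rule infdist_triangle)
    also have "\<dots> \<le> 2 * r + 2 * r"
      using gonzalez_run_covers_sample[OF \<open>0 \<le> r\<close> asg near few run, of "f i"] i
        dist_triangle2[of p "f i" "c (asg p)"] near[OF p] near[OF i(2)] by simp
    finally show ?thesis by simp
  qed
  moreover have "finite Popt" using assms(2,1) by (rule finite_subset)
  ultimately have "Max ((\<lambda>p. infdist p (set cs)) ` Popt) \<le> 4 * r"
    using assms(4) by (subst Max_le_iff) auto
  then show ?thesis
    using outlier_cost_le[OF assms(1-3), of "set cs"] by linarith
qed

lemma significantE:
  assumes "significant P k z eps1 eps2" "finite P"
  obtains Popt asg and c :: "nat \<Rightarrow> 'a::euclidean_space"
  where "Popt \<subseteq> P" "card Popt = card P - z" "asg ` Popt \<subseteq> {..<k}"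
    and "\<And>p. p \<in> Popt \<Longrightarrow> dist p (c (asg p)) \<le> r_opt P k z"
    and "\<And>j. j < k \<Longrightarrow> eps1 / real k * real (card P) \<le> real (card {p\<in>Popt. asg p = j})"
proof -
  obtain c :: "nat \<Rightarrow> 'a" and Popt asg where
    Popt: "Popt \<subseteq> P" "card Popt = card P - z"
    and radius: "Max ((\<lambda>p. infdist p (c ` {..<k})) ` Popt) = r_opt P k z"
    and asg: "\<forall>p\<in>Popt. asg p < k \<and> dist p (c (asg p)) = infdist p (c ` {..<k})"
    and large: "\<forall>j<k. eps1 / real k * real (card P) \<le> real (card {p\<in>Popt. asg p = j})"
    using assms(1) unfolding significant_def by blast
  have "finite Popt" using Popt(1) assms(2) by (rule finite_subset)
  show ?thesis
  proof (rule that[OF Popt])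
    show "asg ` Popt \<subseteq> {..<k}" using asg by auto
    show "dist p (c (asg p)) \<le> r_opt P k z" if "p \<in> Popt" for p
      using asg that \<open>finite Popt\<close> unfolding radius[symmetric] by (auto intro: Max_ge)
    show "eps1 / real k * real (card P) \<le> real (card {p\<in>Popt. asg p = j})" if "j < k" for j
      using large that by blast
  qed
qed

theorem theorem1:
  fixes P :: "'a::euclidean_space set"
    and k z m k' :: nat and eps1 eps2 eta :: real
  assumes "finite P"
    and "0 < z" and "z < card P" and "0 < k"
    and "eps1 > 0" and "eps2 > 0"
    and "significant P k z eps1 eps2"
    and "0 < eta" and "eta < 1"
    and "real m = real k / eps1 * ln (real k / eta)"
    and "real k' = 1 / eta * (eps2 / real k) * real m"
  shows "(\<forall>(f :: nat \<Rightarrow> 'a) cs. gonzalez_run (f ` {..<m}) (k + k') cs \<longrightarrow>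
            real (length cs) = real k + 1 / eta * (eps2 / eps1) * ln (real k / eta))
       \<and> measure_pmf.prob (Pi_pmf {..<m} undefined (\<lambda>_. pmf_of_set P))
           {f. \<forall>cs. gonzalez_run (f ` {..<m}) (k + k') cs \<longrightarrow>
                   outlier_cost P z (set cs) \<le> 4 * r_opt P k z}
         \<ge> (1 - eta) ^ 2"
proof
  note finP = assms(1) and m_def = assms(10) and k'_def = assms(11)
  show "\<forall>(f :: nat \<Rightarrow> 'a) cs. gonzalez_run (f ` {..<m}) (k + k') cs \<longrightarrow>
            real (length cs) = real k + 1 / eta * (eps2 / eps1) * ln (real k / eta)"
    using k'_def m_def assms(4,5) by (simp add: gonzalez_run_def field_simps)
  obtain Popt asg and c :: "nat \<Rightarrow> 'a" where Popt: "Popt \<subseteq> P" "card Popt = card P - z"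
    and asg: "asg ` Popt \<subseteq> {..<k}" and near: "\<And>p. p \<in> Popt \<Longrightarrow> dist p (c (asg p)) \<le> r_opt P k z"
    and large: "\<And>j. j < k \<Longrightarrow> eps1 / real k * real (card P) \<le> real (card {p\<in>Popt. asg p = j})"
    using significantE[OF assms(7) finP] by blast
  have "P \<noteq> {}" "Popt \<noteq> {}" using assms(2,3) Popt(2) by auto
  have "real z = eps2 / real k * real (card P)"
    using assms(7) unfolding significant_def by blast
  moreover have "card (P - Popt) = z"
    using assms(3) Popt finP by (simp add: card_Diff_subset finite_subset)
  ultimately have "real m * real (card (P - Popt)) / real (card P) = eta * real k'"
    using assms(3,8) k'_def by simp
  then have "(1 - eta) ^ 2 \<le> measure_pmf.prob (sample_pmf P m)
      {f. hits_clusters Popt asg m {..<k} f \<and> count_outside Popt m f \<le> k'}"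
    using prob_good_sample_ge[OF finP \<open>P \<noteq> {}\<close> Popt(1) assms(4,5,8,9) large m_def] by blast
  also have "\<dots> \<le> measure_pmf.prob (sample_pmf P m)
      {f. \<forall>cs. gonzalez_run (f ` {..<m}) (k + k') cs \<longrightarrow> outlier_cost P z (set cs) \<le> 4 * r_opt P k z}"
    using outlier_cost_gonzalez_le[OF finP Popt \<open>Popt \<noteq> {}\<close> asg near]
    by (intro measure_pmf.finite_measure_mono) auto
  finally show "(1 - eta) ^ 2 \<le> measure_pmf.prob (Pi_pmf {..<m} undefined (\<lambda>_. pmf_of_set P))
      {f. \<forall>cs. gonzalez_run (f ` {..<m}) (k + k') cs \<longrightarrow> outlier_cost P z (set cs) \<le> 4 * r_opt P k z}"
    by (simp add: sample_pmf_def)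
qed

end
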